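(* Let $r,s$ be positive integers, let $u<v<w$ be three points of $\mathbb{Z}^2$ in the same equivalence class, and let $P$ be a lattice path. Suppose that $P$ passes strictly west of $u$, weakly east of $v$, and weakly west of $w$. Then $P$ is invalid.
   Context: A lattice path is a path in $\mathbb{Z}^2$ consisting of unit steps north ($N$-steps, adding $(0,1)$) and east ($E$-steps, adding $(1,0)$). For fixed positive integers $r,s$, points $v,w\in\mathbb{Z}^2$ are equivalent if $v-w=\ell(r,s)$ for some $\ell\in\mathbb{Z}$; $[v]$ denotes the class of $v$. A lattice path $P$ is valid if whenever $P$ enters a point $v$ with an $E$-step, every later point of $P$ in $[v]$ is also entered by an $E$-step; otherwise it is invalid. $\mathbb{Z}^2$ is partially ordered componentwise: $(x,y)\le(x',y')$ iff $x\le x'$ and $y\le y'$ (and $<$ means $\le$ and $\neq$). A path $P$ passes strictly west of a point $v$ if there is a point $v'$ of $P$ with the same $y$-coordinate as $v$ and $v'<v$. $P$ passes weakly west of $v$ if $P$ has at least one point with the same $y$-coordinate as $v$ and every such point $v'$ satisfies $v'\le v$. $P$ passes weakly east of $v$ if $P$ has at least one point with the same $y$-coordinate as $v$ and every such point $v'$ satisfies $v'\ge v$. *)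

theory Defs
  imports Main "HOL-Library.Product_Order"
begin

type_synonym pt = "int \<times> int"

definition N_step :: "pt \<Rightarrow> pt \<Rightarrow> bool" where
  "N_step p q \<longleftrightarrow> fst q = fst p \<and> snd q = snd p + 1"

definition E_step :: "pt \<Rightarrow> pt \<Rightarrow> bool" where
  "E_step p q \<longleftrightarrow> fst q = fst p + 1 \<and> snd q = snd p"

definition lattice_path :: "pt list \<Rightarrow> bool" where
  "lattice_path ps \<longleftrightarrow> ps \<noteq> [] \<and>
     (\<forall>i. Suc i < length ps \<longrightarrow> N_step (ps ! i) (ps ! Suc i) \<or> E_step (ps ! i) (ps ! Suc i))"

definition equiv_pt :: "int \<Rightarrow> int \<Rightarrow> pt \<Rightarrow> pt \<Rightarrow> bool" where
  "equiv_pt r s v w \<longleftrightarrow> (\<exists>l::int. fst v - fst w = l * r \<and> snd v - snd w = l * s)"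

definition entered_E :: "pt list \<Rightarrow> nat \<Rightarrow> bool" where
  "entered_E ps i \<longleftrightarrow> 0 < i \<and> i < length ps \<and> E_step (ps ! (i - 1)) (ps ! i)"

definition valid_path :: "int \<Rightarrow> int \<Rightarrow> pt list \<Rightarrow> bool" where
  "valid_path r s ps \<longleftrightarrow>
     (\<forall>i j. entered_E ps i \<longrightarrow> i < j \<longrightarrow> j < length ps \<longrightarrow>
        equiv_pt r s (ps ! j) (ps ! i) \<longrightarrow> entered_E ps j)"

text \<open>The order on pt is the componentwise order from Product_Order.\<close>
definition passes_strictly_west :: "pt list \<Rightarrow> pt \<Rightarrow> bool" where
  "passes_strictly_west ps v \<longleftrightarrow> (\<exists>v'\<in>set ps. snd v' = snd v \<and> v' < v)"

definition passes_weakly_west :: "pt list \<Rightarrow> pt \<Rightarrow> bool" where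
  "passes_weakly_west ps v \<longleftrightarrow> (\<exists>v'\<in>set ps. snd v' = snd v) \<and>
     (\<forall>v'\<in>set ps. snd v' = snd v \<longrightarrow> v' \<le> v)"

definition passes_weakly_east :: "pt list \<Rightarrow> pt \<Rightarrow> bool" where
  "passes_weakly_east ps v \<longleftrightarrow> (\<exists>v'\<in>set ps. snd v' = snd v) \<and>
     (\<forall>v'\<in>set ps. snd v' = snd v \<longrightarrow> v \<le> v')"

end

theory Submission imports Defs begin

text \<open>A lattice path meets every row y it visits in an interval from leftmost P y to
rightmost P y, and leftmost P (y + 1) = rightmost P y. Write the points of the class of u as
u + k (r, s) and let f k be the horizontal offset of the leftmost path point in the row of
u + k (r, s) from that point. Validity forces a dichotomy for each row y: the leftmost point
of row y + s, translated back by (r, s), lies either weakly west of the leftmost point of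
row y, or strictly east of all of row y; otherwise that translate would be entered by an
E-step in row y while the leftmost point of row y + s is entered by an N-step. The second
alternative persists to all higher rows. Hence either f never increases, or from some index
on it increases strictly. Passing strictly west of u and weakly east of v gives
f 0 < 0 \<le> f a, so f increases strictly beyond a, which contradicts f (a + b) \<le> 0 coming
from passing weakly west of w.\<close>

lemma lattice_path_Suc_cases:
  assumes "lattice_path P" "Suc i < length P"
  shows "P ! Suc i = (fst (P ! i), snd (P ! i) + 1) \<or> P ! Suc i = (fst (P ! i) + 1, snd (P ! i))"
  using assms unfolding lattice_path_def N_step_def E_step_def by (auto simp: prod_eq_iff)

lemma lattice_path_nth_coord_sum:
  assumes "lattice_path P" "i < length P"
  shows "fst (P ! i) + snd (P ! i) = fst (P ! 0) + snd (P ! 0) + int i"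
  using assms(2)
proof (induction i)
  case (Suc i)
  then show ?case using lattice_path_Suc_cases[OF assms(1) Suc.prems] by auto
qed simp

lemma lattice_path_nth_mono:
  assumes "lattice_path P" "i \<le> j" "j < length P"
  shows "P ! i \<le> P ! j"
  using assms(2,3)
proof (induction j rule: dec_induct)
  case (step j)
  then show ?case
    using lattice_path_Suc_cases[OF assms(1) step.prems] by (auto simp: less_eq_prod_def)
qed simp

lemma lattice_path_index_less:
  assumes "lattice_path P" "i < length P" "snd (P ! i) < snd (P ! j)"
  shows "i < j"
proof (rule ccontr)
  assume "\<not> i < j"
  then have "P ! j \<le> P ! i" using lattice_path_nth_mono[OF assms(1), of j i] assms(2) by simp
  then show False using assms(3) by (simp add: less_eq_prod_def)
qed

lemma lattice_path_lower_row_west: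
  assumes "lattice_path P" "(x, y) \<in> set P" "(x', y') \<in> set P" "y < y'"
  shows "x \<le> x'"
proof -
  obtain i j where ij: "i < length P" "P ! i = (x, y)" "j < length P" "P ! j = (x', y')"
    using assms(2,3) by (metis in_set_conv_nth)
  then have "i < j" using lattice_path_index_less[OF assms(1) ij(1)] ij(2,4) assms(4) by simp
  then show ?thesis using lattice_path_nth_mono[OF assms(1), of i j] ij by simp
qed

lemma lattice_path_row_convex:
  assumes lp: "lattice_path P" and "(x1, y) \<in> set P" "(x2, y) \<in> set P" "x1 \<le> x" "x \<le> x2"
  shows "(x, y) \<in> set P"
proof -
  obtain i j where ij: "i < length P" "P ! i = (x1, y)" "j < length P" "P ! j = (x2, y)"
    using assms(2,3) by (metis in_set_conv_nth)
  define k where "k = i + nat (x - x1)"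
  have sum_i: "x1 + y = fst (P ! 0) + snd (P ! 0) + int i"
    using lattice_path_nth_coord_sum[OF lp, of i] ij by simp
  have "x2 + y = fst (P ! 0) + snd (P ! 0) + int j"
    using lattice_path_nth_coord_sum[OF lp, of j] ij by simp
  then have "k \<le> j" "i \<le> k" using sum_i assms(4,5) unfolding k_def by linarith+
  then have k: "k < length P" "P ! i \<le> P ! k" "P ! k \<le> P ! j"
    using lattice_path_nth_mono[OF lp] ij(3) by (auto intro: le_less_trans)
  then have "snd (P ! k) = y" using ij(2,4) by (simp add: less_eq_prod_def)
  moreover have "fst (P ! k) + snd (P ! k) = x + y"
    using lattice_path_nth_coord_sum[OF lp k(1)] sum_i assms(4) unfolding k_def by simp
  ultimately have "P ! k = (x, y)" by (simp add: prod_eq_iff)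
  then show ?thesis using k(1) by (metis nth_mem)
qed

definition row :: "pt list \<Rightarrow> int \<Rightarrow> int set" where
  "row P y = {x. (x, y) \<in> set P}"

definition leftmost :: "pt list \<Rightarrow> int \<Rightarrow> int" where
  "leftmost P y = Min (row P y)"

definition rightmost :: "pt list \<Rightarrow> int \<Rightarrow> int" where
  "rightmost P y = Max (row P y)"

lemma finite_row: "finite (row P y)"
proof -
  have "row P y \<subseteq> fst ` set P" unfolding row_def by force
  then show ?thesis by (simp add: finite_subset)
qed

lemma row_nonempty_iff: "row P y \<noteq> {} \<longleftrightarrow> (\<exists>x. (x, y) \<in> set P)"
  unfolding row_def by simp

lemma leftmost_in: "row P y \<noteq> {} \<Longrightarrow> (leftmost P y, y) \<in> set P"
  using Min_in[OF finite_row] unfolding leftmost_def row_def by blast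

lemma rightmost_in: "row P y \<noteq> {} \<Longrightarrow> (rightmost P y, y) \<in> set P"
  using Max_in[OF finite_row] unfolding rightmost_def row_def by blast

lemma leftmost_le: "(x, y) \<in> set P \<Longrightarrow> leftmost P y \<le> x"
  using Min_le[OF finite_row] unfolding leftmost_def row_def by blast

lemma rightmost_ge: "(x, y) \<in> set P \<Longrightarrow> x \<le> rightmost P y"
  using Max_ge[OF finite_row] unfolding rightmost_def row_def by blast

lemma leftmost_le_rightmost: "row P y \<noteq> {} \<Longrightarrow> leftmost P y \<le> rightmost P y"
  using leftmost_le rightmost_in by blast

lemma lattice_path_row_nonempty_between:
  assumes lp: "lattice_path P" and "(x1, y1) \<in> set P" "(x2, y2) \<in> set P" "y1 \<le> y" "y \<le> y2"
  shows "row P y \<noteq> {}"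
proof (cases "y1 = y2")
  case True
  then show ?thesis using assms(2,4,5) unfolding row_nonempty_iff by auto
next
  case False
  obtain i j where ij: "i < length P" "P ! i = (x1, y1)" "j < length P" "P ! j = (x2, y2)"
    using assms(2,3) by (metis in_set_conv_nth)
  then have "i < j" using lattice_path_index_less[OF lp ij(1)] ij(2,4) False assms(4,5) by simp
  moreover have "\<bar>snd (P ! Suc k) - snd (P ! k)\<bar> \<le> 1" if "k < j" for k
    using lattice_path_Suc_cases[OF lp, of k] that ij(3) by auto
  ultimately obtain k where "k \<le> j" "snd (P ! k) = y"
    using nat_intermed_int_val[of i j "\<lambda>k. snd (P ! k)" y] ij assms(4,5) by auto
  then have "(fst (P ! k), y) \<in> set P" using ij(3) by (metis le_less_trans nth_mem prod.collapse)
  then show ?thesis unfolding row_nonempty_iff by blast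
qed

lemma lattice_path_leftmost_succ:
  assumes lp: "lattice_path P" and "row P y \<noteq> {}" "row P (y + 1) \<noteq> {}"
  shows "leftmost P (y + 1) = rightmost P y"
proof -
  obtain p where p: "p < length P" "P ! p = (rightmost P y, y)"
    using rightmost_in[OF assms(2)] by (metis in_set_conv_nth)
  obtain q where q: "q < length P" "P ! q = (leftmost P (y + 1), y + 1)"
    using leftmost_in[OF assms(3)] by (metis in_set_conv_nth)
  have "p < q" using lattice_path_index_less[OF lp p(1)] p(2) q(2) by simp
  then have "Suc p < length P" using q(1) by simp
  moreover have "(rightmost P y + 1, y) \<notin> set P" using rightmost_ge by fastforce
  ultimately have "P ! Suc p = (rightmost P y, y + 1)"
    using lattice_path_Suc_cases[OF lp] p by (metis fst_conv nth_mem snd_conv)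
  then have "(rightmost P y, y + 1) \<in> set P" using \<open>Suc p < length P\<close> by (metis nth_mem)
  then show ?thesis
    using leftmost_le lattice_path_lower_row_west[OF lp rightmost_in[OF assms(2)] leftmost_in[OF assms(3)]]
    by (simp add: order_antisym)
qed

lemma entered_E_iff:
  assumes lp: "lattice_path P" and j: "j < length P" "P ! j = (x, y)"
  shows "entered_E P j \<longleftrightarrow> (x - 1, y) \<in> set P"
proof
  assume "entered_E P j"
  then have "0 < j" "P ! (j - 1) = (x - 1, y)"
    using j(2) unfolding entered_E_def E_step_def by (auto simp: prod_eq_iff)
  then show "(x - 1, y) \<in> set P" using j(1) by (metis less_imp_diff_less nth_mem)
next
  assume "(x - 1, y) \<in> set P"
  then obtain i where i: "i < length P" "P ! i = (x - 1, y)" by (metis in_set_conv_nth)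
  then have "j = Suc i"
    using lattice_path_nth_coord_sum[OF lp i(1)] lattice_path_nth_coord_sum[OF lp j(1)] j(2) by simp
  then show "entered_E P j" using i j unfolding entered_E_def E_step_def by simp
qed

lemma valid_path_leftmost_dichotomy:
  assumes lp: "lattice_path P" and val: "valid_path r s P" and "0 \<le> r" "0 \<le> s"
    and "row P y \<noteq> {}" "row P (y + s) \<noteq> {}"
  shows "leftmost P (y + s) - r \<le> leftmost P y \<or> rightmost P y < leftmost P (y + s) - r"
proof (rule ccontr)
  define x where "x = leftmost P (y + s) - r"
  assume "\<not> ?thesis"
  then have x: "leftmost P y < x" "x \<le> rightmost P y" unfolding x_def by auto
  have "(x, y) \<in> set P" "(x - 1, y) \<in> set P"
    using lattice_path_row_convex[OF lp leftmost_in rightmost_in] x assms(5) by auto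
  then obtain i where i: "i < length P" "P ! i = (x, y)" "entered_E P i"
    using entered_E_iff[OF lp] by (metis in_set_conv_nth)
  obtain j where j: "j < length P" "P ! j = (x + r, y + s)"
    using leftmost_in[OF assms(6)] unfolding x_def by (metis diff_add_cancel in_set_conv_nth)
  have "\<not> entered_E P j"
    using entered_E_iff[OF lp j] leftmost_le[of "x + r - 1" "y + s" P] unfolding x_def by auto
  moreover have "int j = int i + r + s"
    using lattice_path_nth_coord_sum[OF lp i(1)] lattice_path_nth_coord_sum[OF lp j(1)] i j by simp
  then have "i \<le> j" using assms(3,4) by linarith
  moreover have "equiv_pt r s (P ! j) (P ! i)"
    unfolding equiv_pt_def using i j by (intro exI[of _ 1]) simp
  ultimately show False
    using val i j unfolding valid_path_def by (metis le_neq_implies_less)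
qed

definition row_shift_east :: "int \<Rightarrow> int \<Rightarrow> pt list \<Rightarrow> int \<Rightarrow> bool" where
  "row_shift_east r s P y \<longleftrightarrow> rightmost P y < leftmost P (y + s) - r"

lemma row_shift_east_propagates:
  assumes lp: "lattice_path P" and val: "valid_path r s P" and "0 \<le> r" "0 \<le> s"
    and rows: "\<And>z. y \<le> z \<Longrightarrow> z \<le> y' + s \<Longrightarrow> row P z \<noteq> {}"
    and "y \<le> y'" and "row_shift_east r s P y"
  shows "row_shift_east r s P y'"
  using assms(6,7,5)
proof (induction y' rule: int_ge_induct)
  case (step z)
  have ne: "row P z \<noteq> {}" "row P (z + 1) \<noteq> {}" "row P (z + s) \<noteq> {}" "row P (z + 1 + s) \<noteq> {}"
    using step.prems step.hyps assms(4) by auto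
  have "leftmost P (z + s) \<le> leftmost P (z + 1 + s)"
    using lattice_path_lower_row_west[OF lp leftmost_in leftmost_in] ne(3,4) by simp
  then have "leftmost P (z + 1) < leftmost P (z + 1 + s) - r"
    using step ne lattice_path_leftmost_succ[OF lp ne(1,2)] unfolding row_shift_east_def by simp
  then show ?case
    using valid_path_leftmost_dichotomy[OF lp val assms(3,4) ne(2)] ne(4)
    unfolding row_shift_east_def by (simp add: add.commute add.left_commute)
qed

lemma increase_persists:
  fixes f :: "nat \<Rightarrow> int" and E :: "nat \<Rightarrow> bool"
  assumes step: "\<And>k. k < n \<Longrightarrow> f (Suc k) \<le> f k \<or> E k"
    and strict: "\<And>k. k < n \<Longrightarrow> E k \<Longrightarrow> f k < f (Suc k)"
    and persist: "\<And>k. E k \<Longrightarrow> Suc k < n \<Longrightarrow> E (Suc k)"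
    and "f 0 < f a" "a < n"
  shows "f a < f n"
proof -
  have "\<exists>k < a. E k"
  proof (rule ccontr)
    assume "\<nexists>k. k < a \<and> E k"
    have "f j \<le> f 0" if "j \<le> a" for j
      using that
    proof (induction j)
      case (Suc j)
      then have "f (Suc j) \<le> f j" using step[of j] \<open>a < n\<close> \<open>\<nexists>k. k < a \<and> E k\<close> by auto
      then show ?case using Suc by simp
    qed simp
    then show False using \<open>f 0 < f a\<close> by (simp add: not_le[symmetric])
  qed
  then obtain k where k: "k < a" "E k" by blast
  have "E j" if "k \<le> j" "j < n" for j
    using that persist k(2) by (induction j rule: dec_induct) auto
  then have "f a < f j" if "a < j" "j \<le> n" for j
    using that strict k(1) by (induction j) (auto simp: less_Suc_eq intro: less_trans)
  then show ?thesis using \<open>a < n\<close> by simp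
qed

lemma valid_path_leftmost_offset_increases:
  assumes lp: "lattice_path P" and val: "valid_path r s P" and rs: "0 \<le> r" "0 \<le> s"
    and rows: "\<And>z. y \<le> z \<Longrightarrow> z \<le> y + int n * s \<Longrightarrow> row P z \<noteq> {}"
    and "leftmost P y < leftmost P (y + int a * s) - int a * r" and "a < n"
  shows "leftmost P (y + int a * s) - int a * r < leftmost P (y + int n * s) - int n * r"
proof -
  define Y where "Y k = y + int k * s" for k
  define f where "f k = leftmost P (Y k) - int k * r" for k
  have Y_Suc: "Y (Suc k) = Y k + s" for k unfolding Y_def by (simp add: algebra_simps)
  have Y_range: "y \<le> Y k \<and> Y k \<le> y + int n * s" if "k \<le> n" for k
    using that rs unfolding Y_def by (simp add: mult_right_mono)
  have "f a < f n"
  proof (rule increase_persists[where E = "\<lambda>k. row_shift_east r s P (Y k)"])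
    fix k assume "k < n"
    then have ne: "row P (Y k) \<noteq> {}" "row P (Y k + s) \<noteq> {}"
      using rows Y_range[of k] Y_range[of "Suc k"] Y_Suc[of k] by auto
    show "f (Suc k) \<le> f k \<or> row_shift_east r s P (Y k)"
      using valid_path_leftmost_dichotomy[OF lp val rs ne]
      unfolding f_def Y_Suc row_shift_east_def by (simp add: algebra_simps)
    show "row_shift_east r s P (Y k) \<Longrightarrow> f k < f (Suc k)"
      using leftmost_le_rightmost[OF ne(1)]
      unfolding f_def Y_Suc row_shift_east_def by (simp add: algebra_simps)
  next
    fix k assume "row_shift_east r s P (Y k)" "Suc k < n"
    then show "row_shift_east r s P (Y (Suc k))"
      using row_shift_east_propagates[OF lp val rs, of "Y k" "Y (Suc k)"] rows
        Y_range[of k] Y_range[of "Suc (Suc k)"] Y_Suc rs by fastforce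
  qed (use assms(6,7) in \<open>simp_all add: f_def Y_def\<close>)
  then show ?thesis unfolding f_def Y_def .
qed

lemma equiv_pt_less_imp_multiple:
  assumes "0 \<le> r" "0 \<le> s" "u < v" "equiv_pt r s u v"
  obtains n :: nat where "0 < n" "fst v = fst u + int n * r" "snd v = snd u + int n * s"
proof -
  obtain l where l: "fst u - fst v = l * r" "snd u - snd v = l * s"
    using assms(4) unfolding equiv_pt_def by blast
  have le: "fst u \<le> fst v" "snd u \<le> snd v" "u \<noteq> v"
    using assms(3) by (auto simp: less_eq_prod_def less_prod_def)
  have "l < 0"
  proof (rule ccontr)
    assume "\<not> l < 0"
    then have "0 \<le> l * r" "0 \<le> l * s" using assms(1,2) by simp_all
    then have "u = v" using l le(1,2) by (simp add: prod_eq_iff)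
    then show False using le(3) by contradiction
  qed
  then show thesis using that[of "nat (- l)"] l by (simp add: algebra_simps)
qed

theorem mainTheorem3:
  fixes r s :: int and u v w :: pt and P :: "pt list"
  assumes "r > 0" and "s > 0"
    and "u < v" and "v < w"
    and "equiv_pt r s u v" and "equiv_pt r s v w"
    and "lattice_path P"
    and "passes_strictly_west P u"
    and "passes_weakly_east P v"
    and "passes_weakly_west P w"
  shows "\<not> valid_path r s P"
proof
  assume val: "valid_path r s P"
  have rs: "0 \<le> r" "0 \<le> s" using assms(1,2) by simp_all
  obtain a where a: "0 < a" "fst v = fst u + int a * r" "snd v = snd u + int a * s"
    using equiv_pt_less_imp_multiple[OF rs assms(3,5)] .
  obtain b where b: "0 < b" "fst w = fst v + int b * r" "snd w = snd v + int b * s"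
    using equiv_pt_less_imp_multiple[OF rs assms(4,6)] .
  obtain pu where pu: "pu \<in> set P" "snd pu = snd u" "pu < u"
    using assms(8) unfolding passes_strictly_west_def by blast
  have xu: "(fst pu, snd u) \<in> set P" "fst pu < fst u"
    using pu by (metis prod.collapse) (use pu in \<open>auto simp: less_prod_def less_eq_prod_def\<close>)
  obtain xw where xw: "(xw, snd w) \<in> set P"
    using assms(10) unfolding passes_weakly_west_def by (metis prod.collapse)
  have rows: "row P z \<noteq> {}" if "snd u \<le> z" "z \<le> snd w" for z
    using lattice_path_row_nonempty_between[OF assms(7) xu(1) xw] that .
  have "snd u \<le> snd v" "snd v \<le> snd w" using assms(3,4) by (simp_all add: less_prod_def less_eq_prod_def)
  then have "(leftmost P (snd v), snd v) \<in> set P" using leftmost_in rows by simp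
  then have "v \<le> (leftmost P (snd v), snd v)"
    using assms(9) unfolding passes_weakly_east_def by simp
  then have east_v: "fst u \<le> leftmost P (snd v) - int a * r" using a(2) by (simp add: less_eq_prod_def)
  have "(xw, snd w) \<le> w" using assms(10) xw unfolding passes_weakly_west_def by simp
  then have "leftmost P (snd w) \<le> fst w" using leftmost_le[OF xw] by (simp add: less_eq_prod_def)
  then have west_w: "leftmost P (snd w) - int (a + b) * r \<le> fst u" using a(2) b(2) by (simp add: algebra_simps)
  have "leftmost P (snd u) < leftmost P (snd u + int a * s) - int a * r"
    using leftmost_le[OF xu(1)] xu(2) east_v a(3) by simp
  moreover have "snd u + int (a + b) * s = snd w" using a(3) b(3) by (simp add: algebra_simps)
  moreover have "a < a + b" using b(1) by simp
  ultimately have "leftmost P (snd v) - int a * r < leftmost P (snd w) - int (a + b) * r"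
    using valid_path_leftmost_offset_increases[OF assms(7) val rs rows, of "snd u" "a + b" a] a(3)
    by simp
  then show False using east_v west_w by simp
qed

end
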